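(* Let $k,n$ be positive integers with $k\leqslant n$ and let $C\in\mathrm{Conf}([n]^k_<)$ be a shelling order. Then its promotion $\partial_D C$ is a shelling order.
   Context: $[n]:=\{1,\ldots,n\}$; $[n]^k_<$ denotes the set of $k$-element subsets of $[n]$. $\mathrm{Conf}([n]^k_<)$ is the set of tuples $C=(C_1,\ldots,C_h)$, $h\geqslant1$, of pairwise distinct elements of $[n]^k_<$. $C$ is a shelling order if for all $i<j$ in $[h]$ there exists $z<j$ with $|C_z\cap C_j|=k-1$ and $C_i\cap C_j\subseteq C_z\cap C_j$. The dual graph $D(C)$ is the graph on vertex set $[h]$ with $\{i,j\}$ an edge iff $|C_i\cap C_j|=k-1$. For a graph $G$ on vertex set $[h]$, its track $T_G=\{v_1,\ldots,v_r\}$ is defined by $v_1=1$ and, for $i\geqslant 2$, $v_i=\min\{j\in[h]: j>v_{i-1},\ \{v_{i-1},j\}\text{ an edge}\}$ if this minimum exists, otherwise $r=i-1$. The promotion of $G$ is the permutation $\partial_G\in S_h$ with $\partial_G(i)=i-1$ for $i\notin T_G$, $\partial_G(v_j)=v_{j+1}-1$ for $j\in[r-1]$, and $\partial_G(v_r)=h$. For $\sigma\in S_h$ set $\sigma C:=(C_{\sigma^{-1}(1)},\ldots,C_{\sigma^{-1}(h)})$. The promotion of $C$ is $\partial_D C:=\partial_{D(C)}C$. *)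

theory Defs
  imports Main
begin

(* A configuration C = (C_1,...,C_h) is a list; C_i (1-based) is nth1 C i. *)
definition nth1 :: "'a list \<Rightarrow> nat \<Rightarrow> 'a" where
  "nth1 C i = C ! (i - 1)"

definition conf :: "nat \<Rightarrow> nat \<Rightarrow> nat set list \<Rightarrow> bool" where
  "conf n k C \<longleftrightarrow> C \<noteq> [] \<and> distinct C \<and>
     (\<forall>A \<in> set C. A \<subseteq> {1..n} \<and> card A = k)"

definition shelling_order :: "nat \<Rightarrow> nat set list \<Rightarrow> bool" where
  "shelling_order k C \<longleftrightarrow>
     (\<forall>i j. 1 \<le> i \<and> i < j \<and> j \<le> length C \<longrightarrow>
        (\<exists>z. 1 \<le> z \<and> z < j \<and> card (nth1 C z \<inter> nth1 C j) = k - 1 \<and>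
             nth1 C i \<inter> nth1 C j \<subseteq> nth1 C z \<inter> nth1 C j))"

definition dual_graph :: "nat \<Rightarrow> nat set list \<Rightarrow> nat \<Rightarrow> nat \<Rightarrow> bool" where
  "dual_graph k C i j \<longleftrightarrow> i \<in> {1..length C} \<and> j \<in> {1..length C} \<and>
     card (nth1 C i \<inter> nth1 C j) = k - 1"

(* a graph on [h] is given by h and a (symmetric) edge relation E *)
definition track_next :: "(nat \<Rightarrow> nat \<Rightarrow> bool) \<Rightarrow> nat \<Rightarrow> nat \<Rightarrow> nat option" where
  "track_next E h v = (if \<exists>j. j \<in> {1..h} \<and> v < j \<and> E v j
      then Some (LEAST j. j \<in> {1..h} \<and> v < j \<and> E v j) else None)"

lemma track_next_gt: "track_next E h v = Some w \<Longrightarrow> v < w \<and> w \<le> h"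
proof -
  assume a: "track_next E h v = Some w"
  let ?P = "\<lambda>j. j \<in> {1..h} \<and> v < j \<and> E v j"
  have ex: "\<exists>j. ?P j"
  proof (rule ccontr)
    assume "\<not> (\<exists>j. ?P j)"
    then have "track_next E h v = None" unfolding track_next_def by (simp only: if_False)
    with a show False by simp
  qed
  then have "track_next E h v = Some (Least ?P)" unfolding track_next_def by (simp only: if_True)
  with a have w: "w = Least ?P" by simp
  from ex have "?P (Least ?P)" by (rule LeastI_ex)
  then show ?thesis unfolding w by simp
qed

function track_from :: "(nat \<Rightarrow> nat \<Rightarrow> bool) \<Rightarrow> nat \<Rightarrow> nat \<Rightarrow> nat list" where
  "track_from E h v = v # (case track_next E h v of None \<Rightarrow> [] | Some w \<Rightarrow> track_from E h w)"
  by pat_completeness auto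
termination
  by (relation "measure (\<lambda>(E, h, v). h - v)")
     (auto dest!: track_next_gt)

definition track :: "(nat \<Rightarrow> nat \<Rightarrow> bool) \<Rightarrow> nat \<Rightarrow> nat list" where
  "track E h = track_from E h 1"

definition promotion_perm :: "(nat \<Rightarrow> nat \<Rightarrow> bool) \<Rightarrow> nat \<Rightarrow> nat \<Rightarrow> nat" where
  "promotion_perm E h i =
     (let T = track E h in
      if i \<notin> set T then i - 1
      else if i = last T then h
      else T ! (Suc (LEAST p. p < length T \<and> T ! p = i)) - 1)"

definition perm_act :: "(nat \<Rightarrow> nat) \<Rightarrow> 'a list \<Rightarrow> 'a list" where
  "perm_act \<sigma> C = map (\<lambda>m. nth1 C (inv_into {1..length C} \<sigma> m)) [1..<Suc (length C)]"

definition promotion :: "nat \<Rightarrow> nat set list \<Rightarrow> nat set list" where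
  "promotion k C = perm_act (promotion_perm (dual_graph k C) (length C)) C"

end

theory Submission
  imports Defs
begin

text \<open>Promotion moves every vertex off the track one place to the left and every track vertex to
  just before its successor on the track (the last one to the end). Consider a pair i, j with i
  before j in the new order. If j is off the track, then i < j, and the old shelling witness z
  for (i, j) is adjacent to j, so the track successor of z, if any, is at most j and differs
  from j: z stays before j. If j is on the track, every z < j stays before j, so only pairs with
  j < i are new; then j has no neighbour in the interval (j, i], and iterating the shelling
  condition down from i produces a witness before j.\<close>

lemma track_next_SomeD:
  assumes "track_next E h v = Some w"
  shows "w \<in> {1..h}" "v < w" "E v w" "\<And>t. t \<in> {1..h} \<Longrightarrow> v < t \<Longrightarrow> E v t \<Longrightarrow> w \<le> t"
proof -
  let ?P = "\<lambda>j. j \<in> {1..h} \<and> v < j \<and> E v j"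
  have ex: "\<exists>j. ?P j"
  proof (rule ccontr)
    assume "\<not> (\<exists>j. ?P j)"
    then have "track_next E h v = None" unfolding track_next_def by (simp only: if_False)
    with assms show False by simp
  qed
  then have w: "w = Least ?P"
    using assms unfolding track_next_def by simp
  show "w \<in> {1..h}" "v < w" "E v w"
    using LeastI_ex[OF ex] unfolding w by auto
  show "\<And>t. t \<in> {1..h} \<Longrightarrow> v < t \<Longrightarrow> E v t \<Longrightarrow> w \<le> t"
    unfolding w by (simp add: Least_le)
qed

lemma track_next_eq_None_iff:
  "track_next E h v = None \<longleftrightarrow> (\<forall>j\<in>{1..h}. v < j \<longrightarrow> \<not> E v j)"
  unfolding track_next_def by auto

declare track_from.simps [simp del]

lemma track_from_None [simp]: "track_next E h v = None \<Longrightarrow> track_from E h v = [v]"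
  by (subst track_from.simps) simp

lemma track_from_Some [simp]:
  "track_next E h v = Some w \<Longrightarrow> track_from E h v = v # track_from E h w"
  by (subst track_from.simps) simp

lemma hd_track_from [simp]: "hd (track_from E h v) = v"
  by (subst track_from.simps) simp

lemma track_from_ne_Nil [simp]: "track_from E h v \<noteq> []"
  by (subst track_from.simps) simp

lemma start_in_track_from: "v \<in> set (track_from E h v)"
  using hd_in_set[OF track_from_ne_Nil] by simp

lemma set_track_from_subset: "set (track_from E h v) \<subseteq> insert v {v<..h}"
proof (induction E h v rule: track_from.induct)
  case (1 E h v)
  show ?case
  proof (cases "track_next E h v")
    case (Some w)
    with "1.IH" track_next_SomeD(1,2)[OF Some] show ?thesis by auto
  qed simp
qed

lemma track_from_next_closed:
  "x \<in> set (track_from E h v) \<Longrightarrow> track_next E h x = Some w \<Longrightarrow> w \<in> set (track_from E h v)"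
proof (induction E h v rule: track_from.induct)
  case (1 E h v)
  show ?case
  proof (cases "track_next E h v")
    case (Some u)
    with "1.IH" "1.prems" start_in_track_from[of u E h] show ?thesis by auto
  qed (use "1.prems" in simp)
qed

lemma track_from_next_le:
  "x \<in> set (track_from E h v) \<Longrightarrow> y \<in> set (track_from E h v) \<Longrightarrow> x < y \<Longrightarrow>
    \<exists>w. track_next E h x = Some w \<and> w \<le> y"
proof (induction E h v rule: track_from.induct)
  case (1 E h v)
  show ?case
  proof (cases "track_next E h v")
    case (Some u)
    have u_le: "z \<in> set (track_from E h u) \<Longrightarrow> u \<le> z" for z
      using set_track_from_subset[of E h u] by auto
    have "v < u" using track_next_SomeD(2)[OF Some] .
    then consider "x = v" "y \<in> set (track_from E h u)"
      | "x \<in> set (track_from E h u)" "y \<in> set (track_from E h u)"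
      using "1.prems" Some u_le by fastforce
    then show ?thesis
    proof cases
      case 1
      then show ?thesis using Some u_le by blast
    next
      case 2
      then show ?thesis using "1.IH"[OF Some] "1.prems"(3) by blast
    qed
  qed (use "1.prems" in simp)
qed

lemma sorted_track_from: "sorted_wrt (<) (track_from E h v)"
proof (induction E h v rule: track_from.induct)
  case (1 E h v)
  show ?case
  proof (cases "track_next E h v")
    case (Some u)
    then have "\<forall>x\<in>set (track_from E h u). v < x"
      using set_track_from_subset[of E h u] track_next_SomeD(2)[OF Some] by auto
    then show ?thesis using "1.IH"[OF Some] Some by simp
  qed simp
qed

lemma last_track_from_iff:
  assumes "x \<in> set (track_from E h v)"
  shows "x = last (track_from E h v) \<longleftrightarrow> track_next E h x = None"
  using assms
proof (induction E h v rule: track_from.induct)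
  case (1 E h v)
  show ?case
  proof (cases "track_next E h v")
    case (Some u)
    have u_le: "z \<in> set (track_from E h u) \<Longrightarrow> v < z" for z
      using set_track_from_subset[of E h u] track_next_SomeD(2)[OF Some] by auto
    have "v < last (track_from E h u)"
      using u_le[OF last_in_set[OF track_from_ne_Nil]] .
    then show ?thesis using "1.IH"[OF Some] "1.prems" Some u_le by auto
  qed (use "1.prems" in simp)
qed

lemma track_from_consecutive:
  "x \<in> set (track_from E h v) \<Longrightarrow> track_next E h x = Some w \<Longrightarrow>
    \<exists>p. Suc p < length (track_from E h v) \<and> track_from E h v ! p = x \<and> track_from E h v ! Suc p = w"
proof (induction E h v rule: track_from.induct)
  case (1 E h v)
  show ?case
  proof (cases "track_next E h v")
    case (Some u)
    show ?thesis
    proof (cases "x = v")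
      case True
      have "track_from E h u ! 0 = u"
        using hd_conv_nth[OF track_from_ne_Nil] by simp
      then show ?thesis using True Some "1.prems"(2) by (intro exI[of _ 0]) simp
    next
      case False
      then have "x \<in> set (track_from E h u)" using "1.prems"(1) Some by simp
      from "1.IH"[OF Some this "1.prems"(2)] obtain p where
        "Suc p < length (track_from E h u)" "track_from E h u ! p = x" "track_from E h u ! Suc p = w"
        by blast
      then show ?thesis using Some by (intro exI[of _ "Suc p"]) simp
    qed
  qed (use "1.prems" in simp)
qed

lemma promotion_perm_on_track:
  assumes "i \<in> set (track E h)"
  shows "promotion_perm E h i = (case track_next E h i of None \<Rightarrow> h | Some w \<Rightarrow> w - 1)"
proof (cases "track_next E h i")
  case None
  then show ?thesis
    using assms last_track_from_iff[of i E h 1] unfolding promotion_perm_def track_def by simp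
next
  case (Some w)
  let ?T = "track E h"
  have not_last: "i \<noteq> last ?T"
    using assms last_track_from_iff[of i E h 1] Some unfolding track_def by simp
  obtain p where p: "Suc p < length ?T" "?T ! p = i" "?T ! Suc p = w"
    using track_from_consecutive[OF assms[unfolded track_def] Some] unfolding track_def by blast
  have "distinct ?T"
    using sorted_track_from strict_sorted_iff unfolding track_def by blast
  then have "(LEAST q. q < length ?T \<and> ?T ! q = i) = p"
    using p by (intro Least_equality) (auto simp: nth_eq_iff_index_eq)
  then show ?thesis using assms not_last Some p unfolding promotion_perm_def Let_def by simp
qed

lemma promotion_perm_off_track:
  "i \<notin> set (track E h) \<Longrightarrow> promotion_perm E h i = i - 1"
  unfolding promotion_perm_def Let_def by simp

lemma le_promotion_perm_on_track:
  "i \<in> set (track E h) \<Longrightarrow> i \<le> h \<Longrightarrow> i \<le> promotion_perm E h i"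
  using promotion_perm_on_track[of i E h] track_next_SomeD(2)[of E h i]
  by (cases "track_next E h i") auto

lemma promotion_perm_ge: "i \<le> h \<Longrightarrow> i - 1 \<le> promotion_perm E h i"
  using le_promotion_perm_on_track[of i E h] promotion_perm_off_track[of i E h]
  by (cases "i \<in> set (track E h)") auto

lemma promotion_perm_in_range:
  assumes "i \<in> {1..h}"
  shows "promotion_perm E h i \<in> {1..h}"
proof (cases "i \<in> set (track E h)")
  case True
  then show ?thesis
    using assms promotion_perm_on_track[of i E h] track_next_SomeD(1,2)[of E h i]
    by (cases "track_next E h i") auto
next
  case False
  then have "i \<noteq> 1" using start_in_track_from[of 1 E h] unfolding track_def by auto
  then show ?thesis using False assms promotion_perm_off_track[of i E h] by auto
qed

lemma promotion_perm_less_of_track: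
  assumes j: "j \<in> set (track E h)" "j \<le> h" and "z < j"
  shows "promotion_perm E h z < promotion_perm E h j"
proof (cases "z \<in> set (track E h)")
  case True
  then obtain w where w: "track_next E h z = Some w" "w \<le> j"
    using track_from_next_le[of z E h 1 j] j \<open>z < j\<close> unfolding track_def by blast
  then have "promotion_perm E h z = w - 1" "z < w"
    using promotion_perm_on_track[OF True] track_next_SomeD(2) by auto
  with w le_promotion_perm_on_track[OF j] show ?thesis by linarith
next
  case False
  then show ?thesis
    using promotion_perm_off_track le_promotion_perm_on_track[OF j] \<open>z < j\<close> by fastforce
qed

lemma promotion_perm_less_off_track:
  assumes j: "j \<notin> set (track E h)" "j \<le> h" and z: "1 \<le> z" "z < j" and "E z j"
  shows "promotion_perm E h z < promotion_perm E h j"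
proof (cases "z \<in> set (track E h)")
  case True
  then obtain w where w: "track_next E h z = Some w"
    using track_next_eq_None_iff[of E h z] assms by fastforce
  have "w \<le> j" using track_next_SomeD(4)[OF w] assms by simp
  moreover have "w \<noteq> j"
    using track_from_next_closed[of z E h 1 w] True w j unfolding track_def by auto
  moreover have "promotion_perm E h z = w - 1" "z < w"
    using promotion_perm_on_track[OF True] w track_next_SomeD(2)[OF w] by auto
  ultimately show ?thesis using promotion_perm_off_track[OF j(1)] by linarith
next
  case False
  then show ?thesis using promotion_perm_off_track[of _ E h] j(1) z by simp
qed

lemma less_of_promotion_perm_less_off_track:
  assumes "j \<notin> set (track E h)" "i \<le> h" "promotion_perm E h i < promotion_perm E h j"
  shows "i < j"
proof (cases "i \<in> set (track E h)")
  case True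
  then show ?thesis
    using le_promotion_perm_on_track[OF True] assms promotion_perm_off_track[of j E h] by simp
next
  case False
  then show ?thesis using assms promotion_perm_off_track[of _ E h] by simp
qed

text \<open>The successor of j on the track lies beyond i.\<close>

lemma promotion_perm_overtake_no_edge:
  assumes "j \<in> set (track E h)" "i \<le> h" "promotion_perm E h i < promotion_perm E h j"
    and "j < t" "t \<le> i"
  shows "\<not> E j t"
proof (cases "track_next E h j")
  case None
  then show ?thesis using track_next_eq_None_iff[of E h j] assms by auto
next
  case (Some w)
  have "promotion_perm E h j = w - 1"
    using promotion_perm_on_track[OF assms(1)] Some by simp
  then have "i - 1 < w - 1"
    using promotion_perm_ge[OF assms(2), of E] assms(3) by linarith
  show ?thesis
  proof
    assume "E j t"
    then have "w \<le> t" using track_next_SomeD(4)[OF Some] assms by simp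
    with \<open>i - 1 < w - 1\<close> \<open>t \<le> i\<close> show False by linarith
  qed
qed

lemma promotion_perm_neq:
  assumes "1 \<le> i" "i < i'" "i' \<le> h"
  shows "promotion_perm E h i \<noteq> promotion_perm E h i'"
proof (cases "i' \<in> set (track E h)")
  case True
  then show ?thesis using promotion_perm_less_of_track assms by (metis less_irrefl)
next
  case off: False
  show ?thesis
  proof (cases "i \<in> set (track E h)")
    case True
    have "promotion_perm E h i \<noteq> i' - 1"
    proof (cases "track_next E h i")
      case (Some w)
      then have "w \<noteq> i'"
        using track_from_next_closed[of i E h 1 w] True off unfolding track_def by auto
      then show ?thesis
        using promotion_perm_on_track[OF True] Some track_next_SomeD(1)[OF Some] assms by auto
    qed (use promotion_perm_on_track[OF True] assms in auto)
    then show ?thesis using promotion_perm_off_track[OF off] by simp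
  next
    case False
    then show ?thesis using promotion_perm_off_track[of _ E h] off assms by simp
  qed
qed

lemma bij_betw_promotion_perm: "bij_betw (promotion_perm E h) {1..h} {1..h}"
proof -
  have "inj_on (promotion_perm E h) {1..h}"
    by (rule inj_onI) (metis atLeastAtMost_iff linorder_neqE_nat promotion_perm_neq)
  moreover have "promotion_perm E h ` {1..h} = {1..h}"
    using calculation promotion_perm_in_range by (intro endo_inj_surj) auto
  ultimately show ?thesis by (simp add: bij_betw_def)
qed

lemma length_perm_act [simp]: "length (perm_act \<sigma> C) = length C"
  unfolding perm_act_def by (simp del: upt_Suc)

lemma nth1_perm_act:
  assumes "b \<in> {1..length C}"
  shows "nth1 (perm_act \<sigma> C) b = nth1 C (inv_into {1..length C} \<sigma> b)"
proof -
  have "b - 1 < length C" "[1..<Suc (length C)] ! (b - 1) = b"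
    using assms by (auto simp del: upt_Suc)
  then show ?thesis
    unfolding perm_act_def nth1_def[of "map _ _"] by (simp del: upt_Suc)
qed

lemma set_nth1: "set C = nth1 C ` {1..length C}"
proof
  show "set C \<subseteq> nth1 C ` {1..length C}"
  proof
    fix x assume "x \<in> set C"
    then obtain p where "p < length C" "C ! p = x" by (auto simp: in_set_conv_nth)
    then show "x \<in> nth1 C ` {1..length C}" unfolding nth1_def
      by (intro image_eqI[of _ _ "Suc p"]) auto
  qed
  show "nth1 C ` {1..length C} \<subseteq> set C" unfolding nth1_def by auto
qed

lemma conf_perm_act:
  assumes "bij_betw \<sigma> {1..length C} {1..length C}" "conf n k C"
  shows "conf n k (perm_act \<sigma> C)"
proof -
  let ?\<tau> = "inv_into {1..length C} \<sigma>"
  have \<tau>: "bij_betw ?\<tau> {1..length C} {1..length C}"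
    using bij_betw_inv_into[OF assms(1)] .
  have "set (perm_act \<sigma> C) = nth1 C ` ?\<tau> ` {1..length C}"
    using set_nth1[of "perm_act \<sigma> C"] nth1_perm_act[of _ C \<sigma>] by (auto simp: image_iff)
  also have "\<dots> = set C"
    using \<tau> set_nth1[of C] by (simp add: bij_betw_def)
  finally have set_eq: "set (perm_act \<sigma> C) = set C" .
  then have "distinct (perm_act \<sigma> C)"
    using assms(2) unfolding conf_def by (metis card_distinct distinct_card length_perm_act)
  then show ?thesis using set_eq assms(2) unfolding conf_def by auto
qed

lemma shelling_order_perm_act:
  assumes bij: "bij_betw \<sigma> {1..length C} {1..length C}"
    and witness: "\<And>i j. i \<in> {1..length C} \<Longrightarrow> j \<in> {1..length C} \<Longrightarrow> \<sigma> i < \<sigma> j \<Longrightarrow>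
      \<exists>z\<in>{1..length C}. \<sigma> z < \<sigma> j \<and> card (nth1 C z \<inter> nth1 C j) = k - 1 \<and>
        nth1 C i \<inter> nth1 C j \<subseteq> nth1 C z \<inter> nth1 C j"
  shows "shelling_order k (perm_act \<sigma> C)"
  unfolding shelling_order_def length_perm_act
proof (intro allI impI)
  let ?\<tau> = "inv_into {1..length C} \<sigma>"
  fix a b assume ab: "1 \<le> a \<and> a < b \<and> b \<le> length C"
  then have a: "a \<in> {1..length C}" and b: "b \<in> {1..length C}" by auto
  have \<sigma>\<tau>: "x \<in> {1..length C} \<Longrightarrow> \<sigma> (?\<tau> x) = x" for x
    using bij by (simp add: bij_betw_inv_into_right)
  have \<tau>_in: "x \<in> {1..length C} \<Longrightarrow> ?\<tau> x \<in> {1..length C}" for x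
    using bij_betw_inv_into[OF bij] bij_betwE by blast
  obtain z where z: "z \<in> {1..length C}" "\<sigma> z < b" "card (nth1 C z \<inter> nth1 C (?\<tau> b)) = k - 1"
    "nth1 C (?\<tau> a) \<inter> nth1 C (?\<tau> b) \<subseteq> nth1 C z \<inter> nth1 C (?\<tau> b)"
    using witness[OF \<tau>_in[OF a] \<tau>_in[OF b]] \<sigma>\<tau>[OF a] \<sigma>\<tau>[OF b] ab by auto
  have "\<sigma> z \<in> {1..length C}" "?\<tau> (\<sigma> z) = z"
    using bij z(1) by (auto simp: bij_betw_def inv_into_f_f)
  then show "\<exists>c. 1 \<le> c \<and> c < b \<and> card (nth1 (perm_act \<sigma> C) c \<inter> nth1 (perm_act \<sigma> C) b) = k - 1 \<and>
      nth1 (perm_act \<sigma> C) a \<inter> nth1 (perm_act \<sigma> C) b \<subseteq> nth1 (perm_act \<sigma> C) c \<inter> nth1 (perm_act \<sigma> C) b"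
    using z a b by (intro exI[of _ "\<sigma> z"]) (simp add: nth1_perm_act)
qed

text \<open>The witness z of the pair (j, i) is adjacent to i, hence differs from j; if z < j the
  witness of (z, j) works, otherwise we descend to the pair (j, z).\<close>

lemma shelling_order_witness_before:
  assumes sh: "shelling_order k C" and "i \<le> length C" "1 \<le> j" "j < i"
    and "\<And>t. j < t \<Longrightarrow> t \<le> i \<Longrightarrow> card (nth1 C j \<inter> nth1 C t) \<noteq> k - 1"
  shows "\<exists>z. 1 \<le> z \<and> z < j \<and> card (nth1 C z \<inter> nth1 C j) = k - 1 \<and>
    nth1 C i \<inter> nth1 C j \<subseteq> nth1 C z \<inter> nth1 C j"
  using assms(2-)
proof (induction i rule: less_induct)
  case (less i)
  from sh less.prems obtain z where z: "1 \<le> z" "z < i" "card (nth1 C z \<inter> nth1 C i) = k - 1"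
    "nth1 C j \<inter> nth1 C i \<subseteq> nth1 C z \<inter> nth1 C i"
    unfolding shelling_order_def by (meson order_trans order_less_imp_le)
  have "z \<noteq> j" using z(3) less.prems(3,4) by auto
  then consider "z < j" | "j < z" by linarith
  then obtain z' where z': "1 \<le> z'" "z' < j" "card (nth1 C z' \<inter> nth1 C j) = k - 1"
    "nth1 C z \<inter> nth1 C j \<subseteq> nth1 C z' \<inter> nth1 C j"
  proof cases
    case 1
    then show ?thesis
      using that sh z(1) less.prems unfolding shelling_order_def by (meson less_le_trans less_imp_le)
  next
    case 2
    then show ?thesis using that less.IH[OF z(2)] less.prems z by auto
  qed
  then show ?case using z(4) by (intro exI[of _ z']) blast
qed

lemma shelling_order_promotion:
  assumes sh: "shelling_order k C"
  shows "shelling_order k (promotion k C)"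
  unfolding promotion_def
proof (rule shelling_order_perm_act[OF bij_betw_promotion_perm])
  let ?h = "length C" and ?E = "dual_graph k C"
  let ?\<sigma> = "promotion_perm ?E ?h" and ?T = "set (track ?E ?h)"
  let ?adj = "\<lambda>z j. card (nth1 C z \<inter> nth1 C j) = k - 1"
  fix i j assume i: "i \<in> {1..?h}" and j: "j \<in> {1..?h}" and less: "?\<sigma> i < ?\<sigma> j"
  have old_witness: "\<exists>z. 1 \<le> z \<and> z < j \<and> ?adj z j \<and> nth1 C i \<inter> nth1 C j \<subseteq> nth1 C z \<inter> nth1 C j"
    if "i < j" using sh that i j unfolding shelling_order_def by auto
  show "\<exists>z\<in>{1..?h}. ?\<sigma> z < ?\<sigma> j \<and> ?adj z j \<and> nth1 C i \<inter> nth1 C j \<subseteq> nth1 C z \<inter> nth1 C j"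
  proof (cases "j \<in> ?T")
    case False
    have "i < j" using less_of_promotion_perm_less_off_track[OF False _ less] i by simp
    then obtain z where z: "1 \<le> z" "z < j" "?adj z j" "nth1 C i \<inter> nth1 C j \<subseteq> nth1 C z \<inter> nth1 C j"
      using old_witness by blast
    have "?E z j" using z j unfolding dual_graph_def by simp
    then have "?\<sigma> z < ?\<sigma> j" using promotion_perm_less_off_track[OF False _ z(1,2)] j by simp
    then show ?thesis using z j by auto
  next
    case True
    have "i \<noteq> j" using less by auto
    then obtain z where z: "1 \<le> z" "z < j" "?adj z j" "nth1 C i \<inter> nth1 C j \<subseteq> nth1 C z \<inter> nth1 C j"
    proof (cases "i < j")
      case False
      have "\<not> ?adj j t" if "j < t" "t \<le> i" for t
        using promotion_perm_overtake_no_edge[OF True _ less that] i j that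
        unfolding dual_graph_def by simp
      then show ?thesis
        using that shelling_order_witness_before[OF sh, of i j] False \<open>i \<noteq> j\<close> i j by auto
    qed (use old_witness in blast)
    then show ?thesis using promotion_perm_less_of_track[OF True _ z(2)] j by auto
  qed
qed

theorem theorem5p4:
  fixes n k :: nat and C :: "nat set list"
  assumes "0 < k" and "k \<le> n"
    and "conf n k C" and "shelling_order k C"
  shows "conf n k (promotion k C) \<and> shelling_order k (promotion k C)"
  using conf_perm_act[OF bij_betw_promotion_perm assms(3)] shelling_order_promotion[OF assms(4)]
  unfolding promotion_def by simp

end
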